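(* Suppose that $n\ge 6$ is even and that $H$ is a $3$-uniform hypergraph on $n$ vertices. If for every vertex $v$ of $H$ the hypergraph $H\setminus v$ is isomorphic to $B_{n-1}$, then $H\cong B_n$.
   Context: $H\setminus v$ is obtained by deleting $v$ and all edges containing it. For $m\ge 1$, $B_m$ is the $3$-uniform hypergraph on $m$ vertices with a partition $V=X\cup Y$ into disjoint sets with $||X|-|Y||\le 1$ whose edges are exactly the triples meeting both $X$ and $Y$. *)

theory Defs
  imports Main
begin

definition uniform3 :: "'a set \<times> 'a set set \<Rightarrow> bool" where
  "uniform3 H \<longleftrightarrow> finite (fst H) \<and> (\<forall>e \<in> snd H. e \<subseteq> fst H \<and> card e = 3)"

definition del_vertex :: "'a set \<times> 'a set set \<Rightarrow> 'a \<Rightarrow> 'a set \<times> 'a set set" where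
  "del_vertex H v = (fst H - {v}, {e \<in> snd H. v \<notin> e})"

definition hg_iso :: "'a set \<times> 'a set set \<Rightarrow> 'b set \<times> 'b set set \<Rightarrow> bool" where
  "hg_iso H G \<longleftrightarrow> (\<exists>f. bij_betw f (fst H) (fst G) \<and>
      (\<forall>e. e \<subseteq> fst H \<longrightarrow> (e \<in> snd H \<longleftrightarrow> f ` e \<in> snd G)))"

text \<open>The hypergraph B_m on vertex set {0..<m}, with X = {0..<m div 2} and
Y = {m div 2..<m} (so ||X|-|Y|| \<le> 1); edges are the triples meeting both X and Y.
Any two such partitions give isomorphic hypergraphs, so this is B_m up to isomorphism.\<close>

definition B :: "nat \<Rightarrow> nat set \<times> nat set set" where
  "B m = ({0..<m}, {e. e \<subseteq> {0..<m} \<and> card e = 3 \<and>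
           e \<inter> {0..<m div 2} \<noteq> {} \<and> e \<inter> {m div 2..<m} \<noteq> {}})"

end

theory Submission
  imports Defs
begin

text \<open>Call two vertices linked if some triple containing both is not an edge.
Two missing triples \<open>{a, b, x}\<close> and \<open>{b, c, y}\<close> avoid some vertex \<open>v\<close>, since
\<open>n \<ge> 6\<close>, and in \<open>H - v \<cong> B (n - 1)\<close> the missing triples are exactly those inside one
side of the bipartition; hence \<open>{a, b, c}\<close> is missing as well. So being linked is an
equivalence relation, and the missing triples of \<open>H\<close> are exactly those inside a class.
The larger side of the bipartition of \<open>H - v\<close> has \<open>n/2 \<ge> 3\<close> vertices and turns out to
be a whole class; counting then leaves room for exactly two classes, of \<open>n/2\<close> vertices
each, and this is \<open>B n\<close>.\<close>

definition cut_triples :: "'a set \<Rightarrow> 'a set \<Rightarrow> 'a set set" where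
  "cut_triples V X = {e. e \<subseteq> V \<and> card e = 3 \<and> e \<inter> X \<noteq> {} \<and> e - X \<noteq> {}}"

lemma B_eq_cut_triples: "B m = ({0..<m}, cut_triples {0..<m} {m div 2..<m})"
proof -
  have "e - {m div 2..<m} = e \<inter> {0..<m div 2}" if "e \<subseteq> {0..<m}" for e :: "nat set"
    using that by auto
  then show ?thesis
    unfolding B_def cut_triples_def by auto
qed

lemma insert3_in_cut_triples_iff:
  assumes "{a, b, c} \<subseteq> V" "a \<noteq> b" "a \<noteq> c" "b \<noteq> c"
  shows "{a, b, c} \<in> cut_triples V X \<longleftrightarrow> \<not> ((a \<in> X \<longleftrightarrow> b \<in> X) \<and> (b \<in> X \<longleftrightarrow> c \<in> X))"
  using assms unfolding cut_triples_def by auto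

lemma image_in_cut_triples_iff:
  assumes "bij_betw h V W" "X \<subseteq> V" "e \<subseteq> V"
  shows "h ` e \<in> cut_triples W (h ` X) \<longleftrightarrow> e \<in> cut_triples V X"
proof -
  have inj: "inj_on h V"
    using assms(1) by (rule bij_betw_imp_inj_on)
  have "card (h ` e) = card e"
    using inj assms(3) by (meson card_image inj_on_subset)
  moreover have "h ` e \<inter> h ` X = {} \<longleftrightarrow> e \<inter> X = {}"
    using inj assms(2,3) by (metis image_is_empty inj_on_image_Int)
  moreover have "h ` e - h ` X = {} \<longleftrightarrow> e - X = {}"
    using inj assms(2,3) by (metis Diff_subset image_is_empty inj_on_image_set_diff subset_trans)
  moreover have "h ` e \<subseteq> W"
    using assms(1,3) bij_betw_imp_surj_on by blast
  ultimately show ?thesis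
    using assms(3) unfolding cut_triples_def by simp
qed

lemma hg_iso_cut_triples:
  assumes "finite V" "finite W" "X \<subseteq> V" "Z \<subseteq> W"
    and "card X = card Z" "card (V - X) = card (W - Z)"
  shows "hg_iso (V, cut_triples V X) (W, cut_triples W Z)"
proof -
  obtain f where f: "bij_betw f X Z"
    using assms finite_same_card_bij finite_subset by metis
  obtain g where g: "bij_betw g (V - X) (W - Z)"
    using assms finite_same_card_bij by (metis finite_Diff)
  define h where "h x = (if x \<in> X then f x else g x)" for x
  have "bij_betw h X Z"
    using f by (rule bij_betw_cong[THEN iffD1, rotated]) (simp add: h_def)
  moreover have "bij_betw h (V - X) (W - Z)"
    using g by (rule bij_betw_cong[THEN iffD1, rotated]) (simp add: h_def)
  ultimately have "bij_betw h (X \<union> (V - X)) (Z \<union> (W - Z))"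
    by (rule bij_betw_combine) blast
  then have h: "bij_betw h V W"
    using assms(3,4) by (simp add: Un_absorb1)
  have "h ` X = Z"
    using \<open>bij_betw h X Z\<close> by (simp add: bij_betw_def)
  then show ?thesis
    unfolding hg_iso_def using h image_in_cut_triples_iff[OF h assms(3)] by auto
qed

lemma hg_iso_cut_triplesE:
  assumes "hg_iso G (W, cut_triples W Z)" "Z \<subseteq> W"
  obtains X where "X \<subseteq> fst G" "card X = card Z"
    and "\<And>e. e \<subseteq> fst G \<Longrightarrow> e \<in> snd G \<longleftrightarrow> e \<in> cut_triples (fst G) X"
proof -
  obtain f where f: "bij_betw f (fst G) W"
    and edges: "\<And>e. e \<subseteq> fst G \<Longrightarrow> e \<in> snd G \<longleftrightarrow> f ` e \<in> cut_triples W Z"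
    using assms(1) unfolding hg_iso_def by auto
  define X where "X = fst G \<inter> f -` Z"
  have X: "X \<subseteq> fst G"
    unfolding X_def by blast
  have image_X: "f ` X = Z"
    using f assms(2) unfolding X_def bij_betw_def by auto
  show thesis
  proof (rule that)
    show "X \<subseteq> fst G"
      by (rule X)
    have "inj_on f X"
      by (rule inj_on_subset[OF bij_betw_imp_inj_on[OF f] X])
    then show "card X = card Z"
      using card_image image_X by metis
  next
    fix e
    assume "e \<subseteq> fst G"
    then show "e \<in> snd G \<longleftrightarrow> e \<in> cut_triples (fst G) X"
      using edges image_in_cut_triples_iff[OF f X] image_X by simp
  qed
qed

lemma hg_iso_del_vertex_B_oddE:
  assumes "hg_iso (del_vertex (V, E) v) (B (2 * k + 1))"
  obtains Y where "Y \<subseteq> V - {v}" "card Y = k + 1"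
    and "\<And>e. e \<subseteq> V - {v} \<Longrightarrow> e \<in> E \<longleftrightarrow> e \<in> cut_triples (V - {v}) Y"
proof -
  have "hg_iso (V - {v}, {e \<in> E. v \<notin> e})
      ({0..<2 * k + 1}, cut_triples {0..<2 * k + 1} {k..<2 * k + 1})"
    using assms B_eq_cut_triples[of "2 * k + 1"] unfolding del_vertex_def by simp
  then obtain Y where Y: "Y \<subseteq> V - {v}" "card Y = k + 1"
    and edges: "\<And>e. e \<subseteq> V - {v} \<Longrightarrow> e \<in> {e \<in> E. v \<notin> e} \<longleftrightarrow> e \<in> cut_triples (V - {v}) Y"
    by (auto elim: hg_iso_cut_triplesE)
  show thesis
  proof (rule that[OF Y])
    fix e
    assume "e \<subseteq> V - {v}"
    then show "e \<in> E \<longleftrightarrow> e \<in> cut_triples (V - {v}) Y"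
      using edges by auto
  qed
qed

lemma hg_iso_cut_triples_B_even:
  assumes "finite V" "K \<subseteq> V" "card K = k" "card (V - K) = k"
  shows "hg_iso (V, cut_triples V K) (B (2 * k))"
proof -
  have "{0..<2 * k} - {k..<2 * k} = {0..<k}"
    by auto
  then show ?thesis
    unfolding B_eq_cut_triples using assms by (auto intro: hg_iso_cut_triples)
qed

lemma obtain_not_in_list:
  assumes "finite A" "length xs < card A"
  obtains x where "x \<in> A" "x \<notin> set xs"
proof -
  have "\<not> A \<subseteq> set xs"
    using assms card_mono[of "set xs" A] card_length[of xs] by auto
  then show thesis
    using that by blast
qed

text \<open>With \<open>n = 2k + 2\<close>, \<open>Y v\<close> is the larger side of the bipartition of \<open>H - v\<close>.\<close>

locale vertex_deleted_cuts =
  fixes V :: "'a set" and E :: "'a set set" and k :: nat and Y :: "'a \<Rightarrow> 'a set"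
  assumes card_V: "card V = 2 * k + 2"
    and two_le_k: "2 \<le> k"
    and Y_subset: "v \<in> V \<Longrightarrow> Y v \<subseteq> V - {v}"
    and card_Y: "v \<in> V \<Longrightarrow> card (Y v) = k + 1"
    and edge_iff_cut: "v \<in> V \<Longrightarrow> e \<subseteq> V - {v} \<Longrightarrow> e \<in> E \<longleftrightarrow> e \<in> cut_triples (V - {v}) (Y v)"
begin

lemma finite_V: "finite V"
  using card_V card.infinite by fastforce

lemma finite_Y: "finite (Y v)" if "v \<in> V"
  using Y_subset[OF that] finite_V finite_subset by blast

lemma triple_edge_iff:
  assumes "v \<in> V" "{a, b, c} \<subseteq> V - {v}" "a \<noteq> b" "a \<noteq> c" "b \<noteq> c"
  shows "{a, b, c} \<in> E \<longleftrightarrow> \<not> ((a \<in> Y v \<longleftrightarrow> b \<in> Y v) \<and> (b \<in> Y v \<longleftrightarrow> c \<in> Y v))"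
  using assms edge_iff_cut insert3_in_cut_triples_iff by metis

definition linked :: "'a \<Rightarrow> 'a \<Rightarrow> bool" where
  "linked a b \<longleftrightarrow> a \<in> V \<and> b \<in> V \<and> (a = b \<or> (\<exists>x \<in> V - {a, b}. {a, b, x} \<notin> E))"

lemma linked_refl: "a \<in> V \<Longrightarrow> linked a a"
  unfolding linked_def by simp

lemma linked_sym: "linked a b \<Longrightarrow> linked b a"
  unfolding linked_def by (auto simp: insert_commute)

lemma missing_triple_if_linked:
  assumes "linked a b" "linked b c" "a \<noteq> b" "b \<noteq> c" "a \<noteq> c"
  shows "{a, b, c} \<notin> E"
proof -
  obtain x where x: "x \<in> V - {a, b}" "{a, b, x} \<notin> E"
    using assms(1,3) unfolding linked_def by blast
  obtain y where y: "y \<in> V - {b, c}" "{b, c, y} \<notin> E"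
    using assms(2,4) unfolding linked_def by blast
  \<comment> \<open>This is where \<open>n \<ge> 6\<close> is needed.\<close>
  obtain v where v: "v \<in> V" "v \<notin> set [a, b, c, x, y]"
    using obtain_not_in_list[OF finite_V, of "[a, b, c, x, y]"] card_V two_le_k by auto
  have abc: "{a, b, c} \<subseteq> V - {v}"
    using assms(1,2) v unfolding linked_def by auto
  have "a \<in> Y v \<longleftrightarrow> b \<in> Y v"
    using triple_edge_iff[OF v(1), of a b x] x abc v assms by auto
  moreover have "b \<in> Y v \<longleftrightarrow> c \<in> Y v"
    using triple_edge_iff[OF v(1), of b c y] y abc v assms by auto
  ultimately show ?thesis
    using triple_edge_iff[OF v(1) abc] assms by auto
qed

lemma missing_triple_iff_linked:
  assumes "{a, b, c} \<subseteq> V" "a \<noteq> b" "a \<noteq> c" "b \<noteq> c"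
  shows "{a, b, c} \<notin> E \<longleftrightarrow> linked a b \<and> linked b c"
proof
  assume missing: "{a, b, c} \<notin> E"
  then have "{b, c, a} \<notin> E"
    by (simp add: insert_commute)
  moreover have "c \<in> V - {a, b}" "a \<in> V - {b, c}" "a \<in> V" "b \<in> V" "c \<in> V"
    using assms by auto
  ultimately show "linked a b \<and> linked b c"
    using missing unfolding linked_def by blast
qed (use assms missing_triple_if_linked in blast)

lemma linked_trans: "linked a b \<Longrightarrow> linked b c \<Longrightarrow> linked a c"
proof (cases "a = b \<or> b = c \<or> a = c")
  case False
  assume ab: "linked a b" and bc: "linked b c"
  then have "{a, c, b} \<notin> E"
    using False missing_triple_if_linked by (metis insert_commute)
  then show "linked a c"
    using ab bc False unfolding linked_def by auto
qed (auto simp: linked_def)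

definition linked_class :: "'a \<Rightarrow> 'a set" where
  "linked_class a = {b. linked a b}"

lemma linked_class_subset: "linked_class a \<subseteq> V"
  unfolding linked_class_def linked_def by blast

lemma self_in_linked_class: "a \<in> V \<Longrightarrow> a \<in> linked_class a"
  unfolding linked_class_def by (simp add: linked_refl)

lemma linked_class_eq: "linked a b \<Longrightarrow> linked_class a = linked_class b"
  unfolding linked_class_def using linked_sym linked_trans by blast

lemma linked_class_eq_or_disjoint:
  "linked_class a = linked_class b \<or> linked_class a \<inter> linked_class b = {}"
  unfolding linked_class_def using linked_sym linked_trans by blast

lemma obtain_third_in_Y:
  assumes "v \<in> V"
  obtains c where "c \<in> Y v" "c \<noteq> a" "c \<noteq> b"
proof -
  have "length [a, b] < card (Y v)"
    using card_Y[OF assms] two_le_k by simp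
  then obtain c where "c \<in> Y v" "c \<notin> set [a, b]"
    by (rule obtain_not_in_list[OF finite_Y[OF assms]])
  then show thesis
    using that by simp
qed

lemma linked_if_in_Y:
  assumes "v \<in> V" "a \<in> Y v" "b \<in> Y v"
  shows "linked a b"
proof (cases "a = b")
  case False
  obtain c where c: "c \<in> Y v" "c \<noteq> a" "c \<noteq> b"
    using obtain_third_in_Y[OF assms(1)] .
  have abc: "{a, b, c} \<subseteq> V - {v}"
    using Y_subset[OF assms(1)] assms(2,3) c(1) by blast
  then have "{a, b, c} \<notin> E"
    using triple_edge_iff[OF assms(1) abc] False assms(2,3) c by auto
  then show ?thesis
    using missing_triple_iff_linked abc False c by blast
qed (use assms Y_subset linked_refl in blast)

lemma in_Y_if_linked:
  assumes "v \<in> V" "a \<in> Y v" "linked a b" "b \<noteq> v"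
  shows "b \<in> Y v"
proof (cases "a = b")
  case False
  obtain c where c: "c \<in> Y v" "c \<noteq> a" "c \<noteq> b"
    using obtain_third_in_Y[OF assms(1)] .
  have "{b, a, c} \<notin> E"
    using missing_triple_if_linked linked_sym[OF assms(3)] linked_if_in_Y[OF assms(1,2) c(1)] False c
    by blast
  moreover have "{b, a, c} \<subseteq> V - {v}"
    using Y_subset[OF assms(1)] assms c(1) linked_def by blast
  ultimately show ?thesis
    using triple_edge_iff[OF assms(1)] False c assms(2) by auto
qed (use assms in simp)

lemma Y_eq_linked_class_minus:
  assumes "v \<in> V" "y \<in> Y v"
  shows "Y v = linked_class y - {v}"
  using linked_if_in_Y[OF assms] in_Y_if_linked[OF assms] Y_subset[OF assms(1)]
  unfolding linked_class_def by blast

lemma Y_eq_linked_class: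
  assumes "v \<in> V" "y \<in> Y v"
  shows "Y v = linked_class y"
proof -
  let ?K = "linked_class y"
  \<comment> \<open>Otherwise \<open>?K\<close> has \<open>k + 2\<close> elements and no \<open>Y w\<close> with \<open>w \<notin> ?K\<close> fits.\<close>
  have "v \<notin> ?K"
  proof
    assume "v \<in> ?K"
    have finite_K: "finite ?K"
      using finite_V linked_class_subset finite_subset by blast
    have "card ?K = k + 2"
      using Y_eq_linked_class_minus[OF assms] card_Y[OF assms(1)] \<open>v \<in> ?K\<close> finite_K
      by (simp add: card_Diff_singleton_if)
    then have card_rest: "card (V - ?K) = k"
      using card_V finite_K linked_class_subset by (simp add: card_Diff_subset)
    then have "V - ?K \<noteq> {}"
      using two_le_k by force
    then obtain w where w: "w \<in> V" "w \<notin> ?K"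
      by blast
    obtain z where z: "z \<in> Y w"
      using card_Y[OF w(1)] by fastforce
    have Y_w: "Y w = linked_class z - {w}"
      using Y_eq_linked_class_minus[OF w(1) z] .
    show False
    proof (cases "linked_class z = ?K")
      case True
      then show False
        using Y_w w(2) card_Y[OF w(1)] \<open>card ?K = k + 2\<close> by simp
    next
      case False
      then have "linked_class z \<inter> ?K = {}"
        using linked_class_eq_or_disjoint by blast
      then have "Y w \<subseteq> V - ?K - {w}"
        using Y_w linked_class_subset by blast
      then have "card (Y w) \<le> card (V - ?K - {w})"
        using finite_V by (intro card_mono) auto
      also have "\<dots> = k - 1"
        using card_rest w by simp
      finally have "card (Y w) \<le> k - 1" .
      then show False
        using card_Y[OF w(1)] by simp
    qed
  qed
  then show ?thesis
    using Y_eq_linked_class_minus[OF assms] by simp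
qed

lemma two_linked_classes:
  obtains K where "K \<subseteq> V" "card K = k + 1" "card (V - K) = k + 1"
    and "\<And>a b. a \<in> V \<Longrightarrow> b \<in> V \<Longrightarrow> linked a b \<longleftrightarrow> (a \<in> K \<longleftrightarrow> b \<in> K)"
proof -
  have "V \<noteq> {}"
    using card_V by auto
  then obtain v where v: "v \<in> V"
    by blast
  have "Y v \<noteq> {}"
    using card_Y[OF v] by auto
  then obtain y where y: "y \<in> Y v"
    by blast
  have y_V: "y \<in> V"
    using Y_subset[OF v] y by blast
  have "Y y \<noteq> {}"
    using card_Y[OF y_V] by auto
  then obtain z where z: "z \<in> Y y"
    by blast
  define K where "K = linked_class y"
  define D where "D = linked_class z"
  have K_eq: "K = Y v" and D_eq: "D = Y y"
    unfolding K_def D_def using Y_eq_linked_class v y y_V z by auto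
  have "y \<in> K" "y \<notin> D"
    unfolding K_def using self_in_linked_class[OF y_V] D_eq Y_subset[OF y_V] by auto
  then have "K \<inter> D = {}"
    unfolding K_def D_def using linked_class_eq_or_disjoint by blast
  moreover have card_K: "card K = k + 1" and card_D: "card D = k + 1"
    using K_eq D_eq card_Y v y_V by auto
  moreover have "K \<subseteq> V" "D \<subseteq> V"
    unfolding K_def D_def using linked_class_subset by auto
  ultimately have "card (K \<union> D) = card V"
    using card_V finite_V by (simp add: card_Un_disjoint finite_subset)
  then have "K \<union> D = V"
    using \<open>K \<subseteq> V\<close> \<open>D \<subseteq> V\<close> finite_V by (metis Un_subset_iff card_subset_eq)
  then have V_minus_K: "V - K = D"
    using \<open>K \<inter> D = {}\<close> by blast
  have class_of: "linked_class a = (if a \<in> K then K else D)" if "a \<in> V" for a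
  proof (cases "a \<in> K")
    case True
    then have "linked y a"
      unfolding K_def linked_class_def by simp
    then show ?thesis
      using True linked_class_eq unfolding K_def by simp
  next
    case False
    then have "linked z a"
      using that V_minus_K unfolding D_def linked_class_def by blast
    then show ?thesis
      using False linked_class_eq unfolding D_def by simp
  qed
  show thesis
  proof (rule that)
    show "K \<subseteq> V" "card K = k + 1" "card (V - K) = k + 1"
      using \<open>K \<union> D = V\<close> card_K card_D V_minus_K by auto
  next
    fix a b
    assume "a \<in> V" "b \<in> V"
    have "linked a b \<longleftrightarrow> b \<in> linked_class a"
      unfolding linked_class_def by simp
    also have "\<dots> \<longleftrightarrow> (a \<in> K \<longleftrightarrow> b \<in> K)"
      using class_of[OF \<open>a \<in> V\<close>] V_minus_K \<open>b \<in> V\<close> by auto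
    finally show "linked a b \<longleftrightarrow> (a \<in> K \<longleftrightarrow> b \<in> K)" .
  qed
qed

theorem edges_eq_cut_triples:
  obtains K where "K \<subseteq> V" "card K = k + 1" "card (V - K) = k + 1"
    and "\<And>e. e \<subseteq> V \<Longrightarrow> card e = 3 \<Longrightarrow> e \<in> E \<longleftrightarrow> e \<in> cut_triples V K"
proof -
  obtain K where K: "K \<subseteq> V" "card K = k + 1" "card (V - K) = k + 1"
    and linked_iff: "\<And>a b. a \<in> V \<Longrightarrow> b \<in> V \<Longrightarrow> linked a b \<longleftrightarrow> (a \<in> K \<longleftrightarrow> b \<in> K)"
    using two_linked_classes by blast
  show thesis
  proof (rule that[OF K])
    fix e
    assume "e \<subseteq> V" "card e = 3"
    then obtain a b c where e: "e = {a, b, c}" "a \<noteq> b" "a \<noteq> c" "b \<noteq> c" "{a, b, c} \<subseteq> V"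
      by (metis card_3_iff)
    then have "e \<notin> E \<longleftrightarrow> (a \<in> K \<longleftrightarrow> b \<in> K) \<and> (b \<in> K \<longleftrightarrow> c \<in> K)"
      using missing_triple_iff_linked[of a b c] linked_iff by simp
    then show "e \<in> E \<longleftrightarrow> e \<in> cut_triples V K"
      using insert3_in_cut_triples_iff[of a b c V K] e by blast
  qed
qed

end

theorem lemma2p5:
  fixes H :: "'a set \<times> 'a set set" and n :: nat
  assumes "n \<ge> 6" and "even n"
    and "uniform3 H" and "card (fst H) = n"
    and "\<forall>v \<in> fst H. hg_iso (del_vertex H v) (B (n - 1))"
  shows "hg_iso H (B n)"
proof -
  obtain V E where H: "H = (V, E)"
    by fastforce
  obtain m where "n = 2 * m"
    using assms(2) by (rule evenE)
  then obtain k where n: "n = 2 * (k + 1)" and "2 \<le> k"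
    using assms(1) by (intro that[of "m - 1"]) auto
  have "\<exists>Y. Y \<subseteq> V - {v} \<and> card Y = k + 1 \<and>
      (\<forall>e \<subseteq> V - {v}. e \<in> E \<longleftrightarrow> e \<in> cut_triples (V - {v}) Y)" if "v \<in> V" for v
  proof -
    have "hg_iso (del_vertex (V, E) v) (B (2 * k + 1))"
      using assms(5) that H n by simp
    then show ?thesis
      by (rule hg_iso_del_vertex_B_oddE) blast
  qed
  then obtain Y where "\<And>v. v \<in> V \<Longrightarrow> Y v \<subseteq> V - {v} \<and> card (Y v) = k + 1 \<and>
      (\<forall>e \<subseteq> V - {v}. e \<in> E \<longleftrightarrow> e \<in> cut_triples (V - {v}) (Y v))"
    by metis
  then interpret vertex_deleted_cuts V E k Y
    using assms(4) H n \<open>2 \<le> k\<close> by unfold_locales auto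
  obtain K where K: "K \<subseteq> V" "card K = k + 1" "card (V - K) = k + 1"
    and edges: "\<And>e. e \<subseteq> V \<Longrightarrow> card e = 3 \<Longrightarrow> e \<in> E \<longleftrightarrow> e \<in> cut_triples V K"
    using edges_eq_cut_triples by blast
  have "E = cut_triples V K"
    using assms(3) H edges unfolding uniform3_def cut_triples_def by auto
  then show ?thesis
    using hg_iso_cut_triples_B_even[OF finite_V K] H n by simp
qed

end
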